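(* Let $m\in\mathbb{N}$ and let $\{W(t)\}_{t=0}^\infty$ be the standard random walk on the discrete hypercube $\{0,1\}^m$ starting at the origin: $W(0)=0$, and for each $t\in\mathbb{N}$ the vector $W(t)$ is obtained from $W(t-1)$ by choosing an index $i\in\{1,\ldots,m\}$ uniformly at random (independently of the past) and replacing the $i$-th coordinate $W(t-1,i)$ by $1-W(t-1,i)$, leaving the other coordinates unchanged. Then for every $t\in\mathbb{N}$, $$\Pr[W(t)=0]\le 2\left(\frac{t}{m}\right)^{t/2}.$$ *)

theory Defs
  imports "HOL-Probability.Probability"
begin

text \<open>Points of {0,1}^m are represented as
  functions nat \<Rightarrow> nat with values in {0,1} on {1..m} (and 0 elsewhere).\<close>
definition hc_step :: "nat \<Rightarrow> (nat \<Rightarrow> nat) \<Rightarrow> (nat \<Rightarrow> nat) pmf" where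
  "hc_step m w = map_pmf (\<lambda>i. w(i := 1 - w i)) (pmf_of_set {1..m})"

fun hc_walk :: "nat \<Rightarrow> nat \<Rightarrow> (nat \<Rightarrow> nat) pmf" where
  "hc_walk m 0 = return_pmf (\<lambda>_. 0)"
| "hc_walk m (Suc t) = bind_pmf (hc_walk m t) (hc_step m)"

end

theory Submission
  imports Defs
begin

text \<open>Write d for the Hamming weight of v. By induction on t, m^t P[W(t) = v] (the number of
  index sequences of length t leading from 0 to v) is at most t^((t+d)/2) m^((t-d)/2) if
  d \<le> t and t + d is even, and 0 otherwise: the walk reaches v from one of its d lower or
  m - d upper neighbours, and the inductive step reduces to d t^(k-1) + t^k \<le> (t+1)^k for
  k = (t+1+d)/2 \<ge> d. For v = 0 the bound is (t/m)^(t/2).\<close>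

definition flip_coord :: "nat \<Rightarrow> (nat \<Rightarrow> nat) \<Rightarrow> nat \<Rightarrow> nat" where
  "flip_coord i w = w(i := 1 - w i)"

definition hamming_weight :: "nat \<Rightarrow> (nat \<Rightarrow> nat) \<Rightarrow> nat" where
  "hamming_weight m v = card {i \<in> {1..m}. v i = 1}"

lemma power_plus_one_ge:
  fixes x :: "'a :: linordered_semidom"
  assumes "0 \<le> x" and "d \<le> k"
  shows "of_nat d * x ^ (k - 1) + x ^ k \<le> (x + 1) ^ k"
proof -
  have "of_nat (Suc k) * x ^ k + x ^ Suc k \<le> (x + 1) ^ Suc k" for k
  proof (induction k)
    case 0
    then show ?case by (simp add: add.commute)
  next
    case (Suc k)
    have "of_nat (Suc (Suc k)) * x ^ Suc k + x ^ Suc (Suc k)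
        \<le> (of_nat (Suc k) * x ^ k + x ^ Suc k) * (x + 1)"
      using assms(1) by (simp add: algebra_simps add_increasing)
    also have "\<dots> \<le> (x + 1) ^ Suc k * (x + 1)"
      using Suc.IH assms(1) by (intro mult_right_mono) simp_all
    finally show ?case by (simp add: mult.commute)
  qed
  moreover have "of_nat d * x ^ (k - 1) \<le> of_nat k * x ^ (k - 1)"
    using assms by (intro mult_right_mono) simp_all
  ultimately show ?thesis
    using assms(2) by (cases k) (auto intro: order_trans[rotated] add_right_mono)
qed

lemma pmf_map_pmf_le:
  assumes "\<And>w. w \<in> set_pmf p \<Longrightarrow> f w = v \<Longrightarrow> w = u"
  shows "pmf (map_pmf f p) v \<le> pmf p u"
proof -
  have "pmf (map_pmf f p) v = measure p (f -` {v} \<inter> set_pmf p)"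
    by (simp add: pmf_map measure_Int_set_pmf)
  also have "\<dots> \<le> measure p {u}"
    using assms by (intro measure_pmf.finite_measure_mono) auto
  also have "\<dots> = pmf p u"
    by (simp add: measure_pmf_single)
  finally show ?thesis .
qed

lemma set_pmf_hc_walk_le_1: "w \<in> set_pmf (hc_walk m t) \<Longrightarrow> w j \<le> 1"
proof (induction t arbitrary: w)
  case 0
  then show ?case by simp
next
  case (Suc t)
  then obtain u i where "u \<in> set_pmf (hc_walk m t)" and "w = u(i := 1 - u i)"
    by (auto simp: hc_step_def)
  with Suc.IH show ?case by auto
qed

lemma flip_coord_eqD: "w i \<le> 1 \<Longrightarrow> flip_coord i w = v \<Longrightarrow> w = flip_coord i v"
  by (auto simp: flip_coord_def)

lemma hc_walk_Suc_flip_coord: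
  "hc_walk m (Suc t) = bind_pmf (pmf_of_set {1..m}) (\<lambda>i. map_pmf (flip_coord i) (hc_walk m t))"
  unfolding hc_walk.simps hc_step_def[abs_def] map_pmf_def flip_coord_def
  by (subst bind_commute_pmf) (rule refl)

lemma pmf_hc_walk_Suc_le:
  assumes "m \<ge> 1"
  shows "pmf (hc_walk m (Suc t)) v \<le> (\<Sum>i\<in>{1..m}. pmf (hc_walk m t) (flip_coord i v)) / real m"
proof -
  have "pmf (hc_walk m (Suc t)) v
      = (\<Sum>i\<in>{1..m}. pmf (map_pmf (flip_coord i) (hc_walk m t)) v) / real m"
    unfolding hc_walk_Suc_flip_coord using assms by (simp add: pmf_bind_pmf_of_set)
  also have "\<dots> \<le> (\<Sum>i\<in>{1..m}. pmf (hc_walk m t) (flip_coord i v)) / real m"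
    by (intro divide_right_mono sum_mono pmf_map_pmf_le flip_coord_eqD set_pmf_hc_walk_le_1) auto
  finally show ?thesis .
qed

lemma hamming_weight_le: "hamming_weight m v \<le> m"
proof -
  have "hamming_weight m v \<le> card {1..m}"
    unfolding hamming_weight_def by (rule card_mono) auto
  then show ?thesis by simp
qed

lemma hamming_weight_flip_coord:
  assumes "i \<in> {1..m}" and "v i \<le> 1"
  shows "hamming_weight m (flip_coord i v) =
           (if v i = 1 then hamming_weight m v - 1 else Suc (hamming_weight m v))"
proof (cases "v i = 1")
  case True
  then have "{j \<in> {1..m}. flip_coord i v j = 1} = {j \<in> {1..m}. v j = 1} - {i}"
    by (auto simp: flip_coord_def)
  with True assms(1) show ?thesis
    by (simp add: hamming_weight_def)
next
  case False
  with assms have "{j \<in> {1..m}. flip_coord i v j = 1} = insert i {j \<in> {1..m}. v j = 1}"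
    by (auto simp: flip_coord_def)
  with False show ?thesis
    by (simp add: hamming_weight_def)
qed

lemma sum_flip_coord_hamming_weight:
  fixes f :: "nat \<Rightarrow> 'a :: semiring_1"
  assumes "\<And>i. i \<in> {1..m} \<Longrightarrow> v i \<le> 1"
  defines "d \<equiv> hamming_weight m v"
  shows "(\<Sum>i\<in>{1..m}. f (hamming_weight m (flip_coord i v)))
           = of_nat d * f (d - 1) + of_nat (m - d) * f (Suc d)"
proof -
  let ?D = "{i \<in> {1..m}. v i = 1}"
  have "card ({1..m} - ?D) = m - d"
    by (subst card_Diff_subset) (auto simp: d_def hamming_weight_def)
  moreover have "(\<Sum>i\<in>{1..m}. f (hamming_weight m (flip_coord i v)))
      = (\<Sum>i\<in>{1..m}. if v i = 1 then f (d - 1) else f (Suc d))"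
    using assms by (intro sum.cong) (simp_all add: hamming_weight_flip_coord)
  moreover have "{1..m} \<inter> {i. v i = 1} = ?D" and "{1..m} \<inter> - {i. v i = 1} = {1..m} - ?D"
    by auto
  ultimately show ?thesis
    by (simp add: sum.If_cases d_def hamming_weight_def)
qed

definition walk_count_bound :: "nat \<Rightarrow> nat \<Rightarrow> nat \<Rightarrow> real" where
  "walk_count_bound m t d =
     (if d \<le> t \<and> even (t + d) then real t ^ ((t + d) div 2) * real m ^ ((t - d) div 2) else 0)"

lemma walk_count_bound_nonneg: "walk_count_bound m t d \<ge> 0"
  by (simp add: walk_count_bound_def)

lemma walk_count_bound_eq:
  "walk_count_bound m (d + 2 * r) d = real (d + 2 * r) ^ (d + r) * real m ^ r"
  by (simp add: walk_count_bound_def)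

lemma walk_count_bound_step:
  assumes "d \<le> m"
  shows "real d * walk_count_bound m t (d - 1) + real (m - d) * walk_count_bound m t (Suc d)
           \<le> walk_count_bound m (Suc t) d"
proof (cases "d \<le> Suc t \<and> even (Suc t + d)")
  case False
  then show ?thesis
    by (cases d) (auto simp: walk_count_bound_def)
next
  case True
  then obtain r where t: "Suc t = d + 2 * r"
    by (metis add_diff_inverse_nat dvd_def even_diff_nat not_le)
  let ?k = "d + r"
  have lower: "real d * walk_count_bound m t (d - 1) \<le> real d * real t ^ (?k - 1) * real m ^ r"
  proof (cases d)
    case (Suc d')
    with t have "t = d' + 2 * r" by simp
    with Suc show ?thesis by (simp add: walk_count_bound_eq)
  qed simp
  have upper: "real (m - d) * walk_count_bound m t (Suc d) \<le> real t ^ ?k * real m ^ r"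
  proof (cases r)
    case 0
    with t show ?thesis by (simp add: walk_count_bound_def)
  next
    case (Suc r')
    with t have t': "t = Suc d + 2 * r'" by simp
    have "walk_count_bound m t (Suc d) = real t ^ ?k * real m ^ r'"
      unfolding t' walk_count_bound_eq using Suc by simp
    then have "real (m - d) * walk_count_bound m t (Suc d)
        = real (m - d) * real t ^ ?k * real m ^ r'"
      by simp
    also have "\<dots> \<le> real m * real t ^ ?k * real m ^ r'"
      using assms by (intro mult_right_mono) simp_all
    finally show ?thesis using Suc by (simp add: ac_simps)
  qed
  have "(real d * real t ^ (?k - 1) + real t ^ ?k) * real m ^ r \<le> (real t + 1) ^ ?k * real m ^ r"
    by (intro mult_right_mono power_plus_one_ge) simp_all
  moreover have "walk_count_bound m (Suc t) d = (real t + 1) ^ ?k * real m ^ r"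
  proof -
    have "real t + 1 = real (d + 2 * r)"
      using arg_cong[OF t, of real] by simp
    then show ?thesis
      unfolding t walk_count_bound_eq by simp
  qed
  ultimately show ?thesis
    using lower upper by (simp add: algebra_simps)
qed

lemma pmf_hc_walk_le_walk_count_bound:
  assumes "m \<ge> 1"
  shows "pmf (hc_walk m t) v \<le> walk_count_bound m t (hamming_weight m v) / real m ^ t"
proof (induction t arbitrary: v)
  case 0
  show ?case
    by (cases "v = (\<lambda>_. 0)") (simp_all add: walk_count_bound_def hamming_weight_def)
next
  case (Suc t)
  show ?case
  proof (cases "v \<in> set_pmf (hc_walk m (Suc t))")
    case False
    then have "pmf (hc_walk m (Suc t)) v = 0"
      by (rule pmf_eq_0_set_pmf[THEN iffD2])
    then show ?thesis
      by (simp add: walk_count_bound_nonneg)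
  next
    case True
    define d where "d = hamming_weight m v"
    have flips: "(\<Sum>i\<in>{1..m}. walk_count_bound m t (hamming_weight m (flip_coord i v)))
        = real d * walk_count_bound m t (d - 1) + real (m - d) * walk_count_bound m t (Suc d)"
      unfolding d_def
      by (rule sum_flip_coord_hamming_weight) (rule set_pmf_hc_walk_le_1[OF True])
    have "pmf (hc_walk m (Suc t)) v
        \<le> (\<Sum>i\<in>{1..m}. pmf (hc_walk m t) (flip_coord i v)) / real m"
      by (rule pmf_hc_walk_Suc_le[OF assms])
    also have "\<dots> \<le> (\<Sum>i\<in>{1..m}. walk_count_bound m t (hamming_weight m (flip_coord i v)))
                     / real m ^ t / real m"
      unfolding sum_divide_distrib by (intro divide_right_mono sum_mono Suc.IH) simp
    also have "\<dots> = (real d * walk_count_bound m t (d - 1)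
                      + real (m - d) * walk_count_bound m t (Suc d)) / real m ^ Suc t"
      unfolding flips by (simp add: mult.commute)
    also have "\<dots> \<le> walk_count_bound m (Suc t) d / real m ^ Suc t"
      by (intro divide_right_mono walk_count_bound_step) (simp_all add: d_def hamming_weight_le)
    finally show ?thesis
      by (simp only: d_def)
  qed
qed

lemma walk_count_bound_0_le:
  assumes "m \<ge> 1" and "t \<ge> 1"
  shows "walk_count_bound m t 0 / real m ^ t \<le> (real t / real m) powr (real t / 2)"
proof (cases "even t")
  case True
  then obtain k where t: "t = 2 * k" ..
  have "walk_count_bound m t 0 = real t ^ k * real m ^ k"
    by (simp add: walk_count_bound_def t)
  moreover have "real m ^ t = real m ^ k * real m ^ k"
    by (simp add: t mult_2 power_add)
  ultimately have "walk_count_bound m t 0 / real m ^ t = (real t / real m) ^ k"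
    using assms(1) by (simp add: power_divide)
  also have "\<dots> = (real t / real m) powr (real t / 2)"
    \<comment> \<open>needs t > 0, since 0 powr 0 = 0\<close>
    using assms by (simp add: t powr_realpow)
  finally show ?thesis by simp
qed (simp add: walk_count_bound_def)

theorem lemma2p10:
  fixes m t :: nat
  assumes "m \<ge> 1" and "t \<ge> 1"
  shows "pmf (hc_walk m t) (\<lambda>_. 0) \<le> 2 * (real t / real m) powr (real t / 2)"
proof -
  have "hamming_weight m (\<lambda>_. 0) = 0"
    by (simp add: hamming_weight_def)
  then have "pmf (hc_walk m t) (\<lambda>_. 0) \<le> walk_count_bound m t 0 / real m ^ t"
    using pmf_hc_walk_le_walk_count_bound[OF assms(1), of t "\<lambda>_. 0"] by simp
  also have "\<dots> \<le> (real t / real m) powr (real t / 2)"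
    using assms by (rule walk_count_bound_0_le)
  also have "\<dots> \<le> 2 * (real t / real m) powr (real t / 2)"
    by simp
  finally show ?thesis .
qed

end
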